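(* Let $q$ and $n$ be nonnegative integers. Then $$\zeta^\star(\{1\}^q,n+2)=\sum_{r=1}^{q+1}\sum_{|\alpha|=q+1}\zeta(\alpha_1,\ldots,\alpha_{r-1},\alpha_r+n+1)=\frac{1}{q!\,n!}\int_{E_2}\left(\log\frac{1}{1-t_2}\right)^q\left(\log\frac{t_2}{t_1}\right)^n\frac{dt_1\,dt_2}{(1-t_1)t_2}.$$
   Context: For positive integers $\alpha_1,\ldots,\alpha_r$ with $\alpha_r\ge2$: $\zeta(\alpha_1,\ldots,\alpha_r)=\sum_{1\le k_1<\cdots<k_r}k_1^{-\alpha_1}\cdots k_r^{-\alpha_r}$ and $\zeta^\star(\alpha_1,\ldots,\alpha_r)=\sum_{1\le k_1\le\cdots\le k_r}k_1^{-\alpha_1}\cdots k_r^{-\alpha_r}$. $\{a\}^k$ denotes $k$ repetitions of $a$. For fixed $r$, $\sum_{|\alpha|=m}$ denotes the sum over all $r$-tuples $(\alpha_1,\ldots,\alpha_r)$ of positive integers with sum $m$. $E_2=\{(t_1,t_2)\in\mathbb{R}^2:0<t_1<t_2<1\}$. *)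

theory Defs
  imports "HOL-Analysis.Analysis"
begin

text \<open>All terms are nonnegative, so the infinite sum is an unconditional sum.\<close>

definition mzv_term :: "nat list \<Rightarrow> nat list \<Rightarrow> real" where
  "mzv_term \<alpha> ks = (\<Prod>i<length \<alpha>. 1 / (real (ks ! i)) ^ (\<alpha> ! i))"

definition mzv :: "nat list \<Rightarrow> real" where
  "mzv \<alpha> = infsum (mzv_term \<alpha>)
     {ks. length ks = length \<alpha> \<and> sorted_wrt (<) ks \<and> (\<forall>k\<in>set ks. 1 \<le> k)}"

definition mzv_star :: "nat list \<Rightarrow> real" where
  "mzv_star \<alpha> = infsum (mzv_term \<alpha>)
     {ks. length ks = length \<alpha> \<and> sorted_wrt (\<le>) ks \<and> (\<forall>k\<in>set ks. 1 \<le> k)}"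

definition compositions :: "nat \<Rightarrow> nat \<Rightarrow> nat list set" where
  "compositions r m = {\<alpha>. length \<alpha> = r \<and> (\<forall>a\<in>set \<alpha>. 1 \<le> a) \<and> sum_list \<alpha> = m}"

definition E2 :: "(real \<times> real) set" where
  "E2 = {(t1, t2). 0 < t1 \<and> t1 < t2 \<and> t2 < 1}"

end

theory Submission
  imports Defs
begin

(*
  Let h_q(k) = zeta*_k({1}^q) be the truncated star sum over 1 <= k_1 <= ... <= k_q <= k of
  1/(k_1 ... k_q). Splitting off the last index gives zeta*({1}^q, n+2) = sum_k h_q(k)/k^(n+2);
  the series converges since exchanging summations yields sum_{k<=N} h_q(k)/k^2 <= 2^(q+1).

  First equality: a weakly increasing sequence k_1 <= ... <= k_(q+1) is the same as the strictly
  increasing list j_1 < ... < j_r of its distinct values together with their multiplicities, a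
  composition alpha of q+1. Under this bijection the term of zeta*({1}^q, n+2) at (k_i) becomes the
  term of zeta(alpha_1, ..., alpha_(r-1), alpha_r + n + 1) at (j_i).

  Second equality: expanding 1/(1-t_1) into a geometric series, the inner integral over t_1 is
  sum_m n! t_2^(m+1)/(m+1)^(n+1), and int_0^1 t^m ln(1/(1-t))^q/q! dt = h_q(m+1)/(m+1). Both are
  proved by induction on the exponent of the logarithm: its power is the integral of the previous
  power, and the order of integration over a triangle is exchanged.
*)

section \<open>Star sums of ones as a series\<close>

definition nondecr_seqs :: "nat \<Rightarrow> nat list set" where
  "nondecr_seqs r = {ks. length ks = r \<and> sorted_wrt (\<le>) ks \<and> (\<forall>k\<in>set ks. 1 \<le> k)}"

definition incr_seqs :: "nat \<Rightarrow> nat list set" where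
  "incr_seqs r = {ks. length ks = r \<and> sorted_wrt (<) ks \<and> (\<forall>k\<in>set ks. 1 \<le> k)}"

lemma mzv_term_Nil [simp]: "mzv_term [] ks = 1"
  by (simp add: mzv_term_def)

lemma mzv_term_Cons [simp]: "mzv_term (a # \<alpha>) (k # ks) = 1 / real k ^ a * mzv_term \<alpha> ks"
  unfolding mzv_term_def length_Cons prod.lessThan_Suc_shift by simp

lemma mzv_term_nonneg: "0 \<le> mzv_term \<alpha> ks"
  unfolding mzv_term_def by (intro prod_nonneg) simp

lemma mzv_term_append:
  "length \<alpha> = length ks \<Longrightarrow> mzv_term (\<alpha> @ \<beta>) (ks @ ls) = mzv_term \<alpha> ks * mzv_term \<beta> ls"
proof (induction \<alpha> arbitrary: ks)
  case (Cons a \<alpha>)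
  then show ?case by (cases ks) auto
qed simp

lemma mzv_term_snoc:
  "length \<alpha> = length ks \<Longrightarrow> mzv_term (\<alpha> @ [a]) (ks @ [k]) = mzv_term \<alpha> ks / real k ^ a"
  by (simp add: mzv_term_append)

lemma mzv_term_replicate: "mzv_term (replicate a 1) (replicate a j) = 1 / real j ^ a"
  by (induction a) auto

lemma mzv_term_add_last:
  assumes "length \<alpha> = length ks" "\<alpha> \<noteq> []"
  shows "mzv_term (butlast \<alpha> @ [last \<alpha> + c]) ks = mzv_term \<alpha> ks / real (last ks) ^ c"
proof -
  have "ks \<noteq> []" using assms by auto
  then have "ks = butlast ks @ [last ks]" "\<alpha> = butlast \<alpha> @ [last \<alpha>]"
    using assms by auto
  moreover have "length (butlast \<alpha>) = length (butlast ks)"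
    using assms by simp
  ultimately show ?thesis
    by (metis mzv_term_snoc power_add divide_divide_eq_left)
qed

lemma mzv_term_ones_snoc:
  assumes "length ks = q"
  shows "mzv_term (replicate (Suc q) 1) (ks @ [k]) = mzv_term (replicate q 1) ks / real k"
proof -
  have ones: "replicate (Suc q) 1 = replicate q 1 @ [1]"
    by (simp add: replicate_append_same)
  show ?thesis
    unfolding ones using assms by (simp add: mzv_term_snoc)
qed

definition harmonic_star :: "nat \<Rightarrow> nat \<Rightarrow> real" where
  "harmonic_star q k =
     (\<Sum>ks\<in>{ks\<in>nondecr_seqs q. \<forall>x\<in>set ks. x \<le> k}. mzv_term (replicate q 1) ks)"

lemma finite_bounded_nondecr_seqs: "finite {ks\<in>nondecr_seqs q. \<forall>x\<in>set ks. x \<le> k}"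
  by (rule finite_subset[OF _ finite_lists_length_eq[of "{..k}" q]]) (auto simp: nondecr_seqs_def)

lemma harmonic_star_0 [simp]: "harmonic_star 0 k = 1"
proof -
  have "{ks\<in>nondecr_seqs 0. \<forall>x\<in>set ks. x \<le> k} = {[]}"
    by (auto simp: nondecr_seqs_def)
  then show ?thesis by (simp add: harmonic_star_def)
qed

lemma harmonic_star_Suc: "harmonic_star (Suc q) k = (\<Sum>j=1..k. harmonic_star q j / j)"
proof -
  let ?B = "\<lambda>q k. {ks\<in>nondecr_seqs q. \<forall>x\<in>set ks. x \<le> k}"
  have "(\<Sum>j=1..k. harmonic_star q j / j)
      = (\<Sum>(j, ks)\<in>Sigma {1..k} (?B q). mzv_term (replicate q 1) ks / j)"
    unfolding harmonic_star_def sum_divide_distrib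
    by (rule sum.Sigma) (auto simp: finite_bounded_nondecr_seqs)
  also have "\<dots> = harmonic_star (Suc q) k"
    unfolding harmonic_star_def
  proof (rule sum.reindex_bij_witness[where i = "\<lambda>ks. (last ks, butlast ks)"
                                         and j = "\<lambda>(j, ks). ks @ [j]"])
    fix ks assume ks: "ks \<in> ?B (Suc q) k"
    then have "ks \<noteq> []" by (auto simp: nondecr_seqs_def)
    then show "(case (last ks, butlast ks) of (j, ks) \<Rightarrow> ks @ [j]) = ks" by simp
    have "butlast ks @ [last ks] \<in> ?B (Suc q) k"
      using ks \<open>ks \<noteq> []\<close> by simp
    then show "(last ks, butlast ks) \<in> Sigma {1..k} (?B q)"
      by (auto simp: nondecr_seqs_def sorted_wrt_append)
  next
    fix p assume p: "p \<in> Sigma {1..k} (?B q)"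
    then show "(last (case p of (j, ks) \<Rightarrow> ks @ [j]), butlast (case p of (j, ks) \<Rightarrow> ks @ [j])) = p"
      by auto
    show "(case p of (j, ks) \<Rightarrow> ks @ [j]) \<in> ?B (Suc q) k"
      using p by (fastforce simp: nondecr_seqs_def sorted_wrt_append intro: le_trans)
    show "mzv_term (replicate (Suc q) 1) (case p of (j, ks) \<Rightarrow> ks @ [j])
        = (case p of (j, ks) \<Rightarrow> mzv_term (replicate q 1) ks / real j)"
      using p mzv_term_ones_snoc by (auto simp: nondecr_seqs_def)
  qed
  finally show ?thesis ..
qed

lemma harmonic_star_nonneg: "0 \<le> harmonic_star q k"
  unfolding harmonic_star_def by (intro sum_nonneg mzv_term_nonneg)

lemma sum_inverse_squares_le:
  assumes "1 \<le> j"
  shows "(\<Sum>k=j..N. 1 / real k ^ 2) \<le> 2 / j"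
proof -
  have "(\<Sum>k=j..N. 1 / real k ^ 2) \<le> (\<Sum>k=j..N. 2 * (1 / real k - 1 / real (Suc k)))"
  proof (rule sum_mono)
    fix k assume "k \<in> {j..N}"
    then have "1 \<le> real k" using assms by auto
    moreover have "real k \<le> real k * real k"
      using mult_right_mono[of 1 "real k" "real k"] \<open>1 \<le> real k\<close> by simp
    moreover have "0 < real k + real k * real k"
      using \<open>1 \<le> real k\<close> by (intro add_pos_nonneg) auto
    ultimately show "1 / real k ^ 2 \<le> 2 * (1 / real k - 1 / real (Suc k))"
      by (simp add: field_simps power2_eq_square)
  qed
  also have "\<dots> \<le> 2 / j"
  proof (cases "j \<le> N")
    case True
    have "(\<Sum>k=j..N. 1 / real k - 1 / real (Suc k)) = 1 / j - 1 / Suc N"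
      using True by (induction N rule: dec_induct) (auto simp: sum.cl_ivl_Suc)
    then have "(\<Sum>k=j..N. 2 * (1 / real k - 1 / real (Suc k))) = 2 * (1 / j - 1 / Suc N)"
      by (simp only: sum_distrib_left[symmetric])
    then show ?thesis by simp
  qed simp
  finally show ?thesis .
qed

(* Exchanging the two summations reduces the bound for q+1 to the one for q. *)
lemma sum_harmonic_star_div_square_le: "(\<Sum>k=1..N. harmonic_star q k / real k ^ 2) \<le> 2 ^ Suc q"
proof (induction q)
  case 0
  show ?case using sum_inverse_squares_le[of 1 N] by simp
next
  case (Suc q)
  have "(\<Sum>k=1..N. harmonic_star (Suc q) k / real k ^ 2)
      = (\<Sum>k\<in>{1..N}. \<Sum>j\<in>{j\<in>{1..N}. j \<le> k}. harmonic_star q j / j / real k ^ 2)"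
    by (intro sum.cong) (auto simp: harmonic_star_Suc sum_divide_distrib intro!: sum.cong)
  also have "\<dots> = (\<Sum>j\<in>{1..N}. \<Sum>k\<in>{k\<in>{1..N}. j \<le> k}. harmonic_star q j / j / real k ^ 2)"
    by (rule sum.swap_restrict) auto
  also have "\<dots> = (\<Sum>j=1..N. harmonic_star q j / j * (\<Sum>k=j..N. 1 / real k ^ 2))"
    by (intro sum.cong) (auto simp: sum_distrib_left intro!: sum.cong)
  also have "\<dots> \<le> (\<Sum>j=1..N. harmonic_star q j / j * (2 / j))"
    by (intro sum_mono mult_left_mono sum_inverse_squares_le divide_nonneg_nonneg
          harmonic_star_nonneg) auto
  also have "\<dots> = 2 * (\<Sum>j=1..N. harmonic_star q j / real j ^ 2)"
    unfolding sum_distrib_left by (intro sum.cong) (simp_all add: power2_eq_square)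
  also have "\<dots> \<le> 2 ^ Suc (Suc q)"
    using Suc.IH by simp
  finally show ?case .
qed

lemma summable_harmonic_star_series:
  "summable (\<lambda>m. harmonic_star q (Suc m) / real (Suc m) ^ (n + 2))"
proof (rule summableI_nonneg_bounded)
  fix N
  have "(\<Sum>m<N. harmonic_star q (Suc m) / real (Suc m) ^ (n + 2))
      \<le> (\<Sum>m<N. harmonic_star q (Suc m) / real (Suc m) ^ 2)"
    by (intro sum_mono divide_left_mono harmonic_star_nonneg power_increasing) auto
  also have "\<dots> = (\<Sum>k=1..N. harmonic_star q k / real k ^ 2)"
    by (simp add: sum.atLeast1_atMost_eq)
  also have "\<dots> \<le> 2 ^ Suc q"
    by (rule sum_harmonic_star_div_square_le)
  finally show "(\<Sum>m<N. harmonic_star q (Suc m) / real (Suc m) ^ (n + 2)) \<le> 2 ^ Suc q" .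
qed (simp add: harmonic_star_nonneg)

lemma has_sum_mzv_star_ones:
  "(mzv_term (replicate q 1 @ [n + 2]) has_sum (\<Sum>m. harmonic_star q (Suc m) / real (Suc m) ^ (n + 2)))
     (nondecr_seqs (Suc q))"
proof -
  let ?B = "\<lambda>m. {ks\<in>nondecr_seqs q. \<forall>x\<in>set ks. x \<le> Suc m}"
  let ?c = "\<lambda>m. harmonic_star q (Suc m) / real (Suc m) ^ (n + 2)"
  define f where "f = (\<lambda>(m, ks). mzv_term (replicate q 1) ks / real (Suc m) ^ (n + 2))"
  have fibre: "((\<lambda>ks. f (m, ks)) has_sum ?c m) (?B m)" for m
    unfolding f_def harmonic_star_def sum_divide_distrib
    by (intro has_sum_finiteI finite_bounded_nondecr_seqs) simp
  have c: "(?c has_sum (\<Sum>m. ?c m)) UNIV"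
    by (intro sums_nonneg_imp_has_sum summable_sums summable_harmonic_star_series
          divide_nonneg_nonneg harmonic_star_nonneg) auto
  have "f summable_on Sigma UNIV ?B"
    using fibre c by (intro summable_on_SigmaI[where g = ?c])
      (auto simp: f_def has_sum_imp_summable intro!: divide_nonneg_nonneg mzv_term_nonneg)
  then have f: "(f has_sum (\<Sum>m. ?c m)) (Sigma UNIV ?B)"
    using fibre c by (intro has_sum_SigmaI[where g = ?c])
  have "(f has_sum (\<Sum>m. ?c m)) (Sigma UNIV ?B)
      = (mzv_term (replicate q 1 @ [n + 2]) has_sum (\<Sum>m. ?c m)) (nondecr_seqs (Suc q))"
  proof (rule has_sum_reindex_bij_witness[where i = "\<lambda>ks. (last ks - 1, butlast ks)"
                                           and j = "\<lambda>(m, ks). ks @ [Suc m]"])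
    fix p assume p: "p \<in> Sigma UNIV ?B"
    then show "(last (case p of (m, ks) \<Rightarrow> ks @ [Suc m]) - 1,
        butlast (case p of (m, ks) \<Rightarrow> ks @ [Suc m])) = p"
      by auto
    show "(case p of (m, ks) \<Rightarrow> ks @ [Suc m]) \<in> nondecr_seqs (Suc q)"
      using p by (auto simp: nondecr_seqs_def sorted_wrt_append)
    show "mzv_term (replicate q 1 @ [n + 2]) (case p of (m, ks) \<Rightarrow> ks @ [Suc m]) = f p"
      using p by (auto simp: f_def nondecr_seqs_def mzv_term_snoc)
  next
    fix ks assume ks: "ks \<in> nondecr_seqs (Suc q)"
    then have "ks \<noteq> []" by (auto simp: nondecr_seqs_def)
    moreover from ks \<open>ks \<noteq> []\<close> have "1 \<le> last ks" by (auto simp: nondecr_seqs_def)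
    ultimately have "ks = butlast ks @ [Suc (last ks - 1)]" by simp
    then show "(case (last ks - 1, butlast ks) of (m, ks) \<Rightarrow> ks @ [Suc m]) = ks" by simp
    have "butlast ks @ [last ks] \<in> nondecr_seqs (Suc q)"
      using ks \<open>ks \<noteq> []\<close> by simp
    then show "(last ks - 1, butlast ks) \<in> Sigma UNIV ?B"
      by (auto simp: nondecr_seqs_def sorted_wrt_append)
  qed simp
  with f show ?thesis by simp
qed

section \<open>Runs of weakly increasing sequences\<close>

(* A pair (alpha, js) stands for the weakly increasing sequence in which js!i is repeated alpha!i
   times. *)
fun expand_runs :: "nat list \<times> nat list \<Rightarrow> nat list" where
  "expand_runs (a # \<alpha>, j # js) = replicate a j @ expand_runs (\<alpha>, js)"
| "expand_runs _ = []"

fun group_runs :: "nat list \<Rightarrow> nat list \<times> nat list" where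
  "group_runs [] = ([], [])"
| "group_runs (k # ks) = (case group_runs ks of
      (a # \<alpha>, j # js) \<Rightarrow> if j = k then (Suc a # \<alpha>, j # js) else (1 # a # \<alpha>, k # j # js)
    | _ \<Rightarrow> ([1], [k]))"

definition nonempty_compositions :: "nat \<Rightarrow> nat list set" where
  "nonempty_compositions m = {\<alpha>. \<alpha> \<noteq> [] \<and> (\<forall>a\<in>set \<alpha>. 1 \<le> a) \<and> sum_list \<alpha> = m}"

definition run_encodings :: "nat \<Rightarrow> (nat list \<times> nat list) set" where
  "run_encodings m = (SIGMA \<alpha>:nonempty_compositions m. incr_seqs (length \<alpha>))"

lemma length_le_sum_list: "\<forall>a\<in>set \<alpha>. 1 \<le> a \<Longrightarrow> length \<alpha> \<le> sum_list (\<alpha> :: nat list)"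
  by (induction \<alpha>) auto

lemma finite_compositions: "finite (compositions r m)"
  by (rule finite_subset[OF _ finite_lists_length_eq[of "{..m}" r]])
    (auto simp: compositions_def member_le_sum_list)

lemma nonempty_compositions_eq_Union: "nonempty_compositions m = (\<Union>r\<in>{1..m}. compositions r m)"
  using length_le_sum_list by (fastforce simp: nonempty_compositions_def compositions_def Suc_le_eq)

lemma length_expand_runs: "length \<alpha> = length js \<Longrightarrow> length (expand_runs (\<alpha>, js)) = sum_list \<alpha>"
proof (induction \<alpha> arbitrary: js)
  case (Cons a \<alpha>)
  then show ?case by (cases js) auto
qed simp

lemma set_expand_runs_subset: "set (expand_runs (\<alpha>, js)) \<subseteq> set js"
proof (induction \<alpha> arbitrary: js)
  case (Cons a \<alpha>)
  then show ?case by (cases js) auto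
qed simp

lemma set_expand_runs:
  "length \<alpha> = length js \<Longrightarrow> \<forall>a\<in>set \<alpha>. 1 \<le> a \<Longrightarrow> set (expand_runs (\<alpha>, js)) = set js"
proof (induction \<alpha> arbitrary: js)
  case (Cons a \<alpha>)
  then show ?case by (cases js) auto
qed simp

lemma sorted_expand_runs:
  "length \<alpha> = length js \<Longrightarrow> sorted_wrt (<) js \<Longrightarrow> sorted_wrt (\<le>) (expand_runs (\<alpha>, js))"
proof (induction \<alpha> arbitrary: js)
  case (Cons a \<alpha>)
  then obtain j js' where js: "js = j # js'" by (cases js) auto
  then have "\<forall>y\<in>set (expand_runs (\<alpha>, js')). j \<le> y"
    using set_expand_runs_subset[of \<alpha> js'] Cons.prems by fastforce
  with Cons js show ?case by (auto simp: sorted_wrt_append)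
qed simp

lemma last_expand_runs:
  "length \<alpha> = length js \<Longrightarrow> \<alpha> \<noteq> [] \<Longrightarrow> \<forall>a\<in>set \<alpha>. 1 \<le> a \<Longrightarrow> last (expand_runs (\<alpha>, js)) = last js"
proof (induction \<alpha> arbitrary: js)
  case (Cons a \<alpha>)
  then obtain j js' where js: "js = j # js'" by (cases js) auto
  show ?case
  proof (cases "\<alpha> = []")
    case False
    then have "expand_runs (\<alpha>, js') \<noteq> []"
      using set_expand_runs[of \<alpha> js'] Cons.prems js by auto
    with Cons False js show ?thesis by auto
  qed (use Cons js in auto)
qed simp

lemma mzv_term_expand_runs:
  "length \<alpha> = length js \<Longrightarrow> mzv_term (replicate (sum_list \<alpha>) 1) (expand_runs (\<alpha>, js)) = mzv_term \<alpha> js"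
proof (induction \<alpha> arbitrary: js)
  case (Cons a \<alpha>)
  then obtain j js' where "js = j # js'" by (cases js) auto
  with Cons show ?case
    by (simp add: replicate_add mzv_term_append mzv_term_replicate[unfolded One_nat_def])
qed simp

lemma group_runs_correct:
  assumes "group_runs ks = (\<alpha>, js)"
  shows "length \<alpha> = length js \<and> (\<forall>a\<in>set \<alpha>. 1 \<le> a) \<and> expand_runs (\<alpha>, js) = ks
    \<and> (ks \<noteq> [] \<longrightarrow> hd js = hd ks) \<and> (sorted_wrt (\<le>) ks \<longrightarrow> sorted_wrt (<) js)"
  using assms
proof (induction ks arbitrary: \<alpha> js)
  case (Cons k ks)
  obtain \<beta> \<gamma> where g: "group_runs ks = (\<beta>, \<gamma>)" by fastforce
  note IH = Cons.IH[OF g]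
  show ?case
  proof (cases ks)
    case Nil
    with Cons.prems g show ?thesis by auto
  next
    case (Cons k' ks')
    with IH obtain j \<gamma>' b \<beta>' where \<gamma>: "\<gamma> = j # \<gamma>'" and \<beta>: "\<beta> = b # \<beta>'" and "j = k'"
      by (cases \<gamma>; cases \<beta>) auto
    show ?thesis
    proof (cases "j = k")
      case True
      with Cons.prems g \<gamma> \<beta> have "\<alpha> = Suc b # \<beta>'" "js = \<gamma>" by auto
      with IH True \<gamma> \<beta> show ?thesis by auto
    next
      case False
      with Cons.prems g \<gamma> \<beta> have "\<alpha> = 1 # \<beta>" "js = k # \<gamma>" by auto
      moreover have "sorted_wrt (<) (k # \<gamma>)" if "sorted_wrt (\<le>) (k # ks)"
      proof -
        have "k < j" using that False \<open>j = k'\<close> \<open>ks = k' # ks'\<close> by auto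
        moreover have "sorted_wrt (<) \<gamma>" using IH that by simp
        ultimately show ?thesis using \<gamma> by auto
      qed
      ultimately show ?thesis using IH \<gamma> \<beta> \<open>j = k'\<close> \<open>ks = k' # ks'\<close> by auto
    qed
  qed
qed simp

lemma group_expand_runs:
  "length \<alpha> = length js \<Longrightarrow> \<forall>a\<in>set \<alpha>. 1 \<le> a \<Longrightarrow> sorted_wrt (<) js
    \<Longrightarrow> group_runs (expand_runs (\<alpha>, js)) = (\<alpha>, js)"
proof (induction \<alpha> arbitrary: js)
  case (Cons a \<alpha>)
  then obtain j js' where js: "js = j # js'" by (cases js) auto
  from Cons.prems obtain a' where a: "a = Suc a'" by (cases a) auto
  have IH: "group_runs (expand_runs (\<alpha>, js')) = (\<alpha>, js')"
    using Cons js by simp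
  have "group_runs (replicate (Suc i) j @ expand_runs (\<alpha>, js')) = (Suc i # \<alpha>, j # js')" for i
  proof (induction i)
    case 0
    show ?case
    proof (cases js')
      case (Cons j' js'')
      with Cons.prems js obtain b \<beta> where "\<alpha> = b # \<beta>" by (cases \<alpha>) auto
      with IH Cons.prems js \<open>js' = j' # js''\<close> show ?thesis by auto
    qed (use IH in auto)
  next
    case (Suc i)
    then show ?case by simp
  qed
  then show ?case using js a by simp
qed simp

lemma has_sum_run_encodings_iff:
  "((\<lambda>(\<alpha>, js). mzv_term (butlast \<alpha> @ [last \<alpha> + c]) js) has_sum S) (run_encodings (Suc q))
   \<longleftrightarrow> (mzv_term (replicate q 1 @ [Suc c]) has_sum S) (nondecr_seqs (Suc q))"
proof (rule has_sum_reindex_bij_witness[where i = group_runs and j = expand_runs])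
  fix p assume "p \<in> run_encodings (Suc q)"
  then obtain \<alpha> js where p: "p = (\<alpha>, js)" and \<alpha>: "\<alpha> \<noteq> []" "\<forall>a\<in>set \<alpha>. 1 \<le> a" "sum_list \<alpha> = Suc q"
    and js: "length js = length \<alpha>" "sorted_wrt (<) js" "\<forall>j\<in>set js. 1 \<le> j"
    by (auto simp: run_encodings_def nonempty_compositions_def incr_seqs_def)
  show "group_runs (expand_runs p) = p"
    using p \<alpha> js by (simp add: group_expand_runs)
  show "expand_runs p \<in> nondecr_seqs (Suc q)"
    using p \<alpha> js by (simp add: nondecr_seqs_def length_expand_runs set_expand_runs sorted_expand_runs)
  have ones: "replicate q 1 @ [1] = replicate (sum_list \<alpha>) 1"
    using \<alpha> by (simp add: replicate_append_same)
  have "mzv_term (replicate q 1 @ [Suc c]) (expand_runs p)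
      = mzv_term (replicate q 1 @ [1]) (expand_runs p) / real (last (expand_runs p)) ^ c"
    using mzv_term_add_last[of "replicate q 1 @ [1]" "expand_runs p" c] p \<alpha> js
    by (simp add: length_expand_runs)
  also have "\<dots> = mzv_term \<alpha> js / real (last js) ^ c"
    using p \<alpha> js mzv_term_expand_runs[of \<alpha> js] unfolding ones by (simp add: last_expand_runs)
  also have "\<dots> = mzv_term (butlast \<alpha> @ [last \<alpha> + c]) js"
    using \<alpha> js by (simp add: mzv_term_add_last)
  finally show "mzv_term (replicate q 1 @ [Suc c]) (expand_runs p)
      = (case p of (\<alpha>, js) \<Rightarrow> mzv_term (butlast \<alpha> @ [last \<alpha> + c]) js)"
    using p by simp
next
  fix ks assume ks: "ks \<in> nondecr_seqs (Suc q)"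
  obtain \<alpha> js where g: "group_runs ks = (\<alpha>, js)" by fastforce
  note group = group_runs_correct[OF g]
  show "expand_runs (group_runs ks) = ks"
    using g group by simp
  have "ks \<noteq> []" using ks by (auto simp: nondecr_seqs_def)
  with group have "\<alpha> \<noteq> []" by auto
  with ks group show "group_runs ks \<in> run_encodings (Suc q)"
    unfolding g using length_expand_runs[of \<alpha> js] set_expand_runs[of \<alpha> js]
    by (auto simp: run_encodings_def nonempty_compositions_def incr_seqs_def nondecr_seqs_def)
qed simp

lemma mzv_star_ones_eq_sum_mzv:
  assumes "mzv_term (replicate q 1 @ [Suc c]) summable_on nondecr_seqs (Suc q)"
  shows "mzv_star (replicate q 1 @ [Suc c])
       = (\<Sum>r=1..q+1. \<Sum>\<alpha>\<in>compositions r (q + 1). mzv (butlast \<alpha> @ [last \<alpha> + c]))"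
proof -
  define g where "g = (\<lambda>(\<alpha>, js). mzv_term (butlast \<alpha> @ [last \<alpha> + c]) js)"
  have "(mzv_term (replicate q 1 @ [Suc c]) has_sum mzv_star (replicate q 1 @ [Suc c]))
      (nondecr_seqs (Suc q))"
    using assms unfolding mzv_star_def nondecr_seqs_def by simp
  then have g: "(g has_sum mzv_star (replicate q 1 @ [Suc c]))
      (SIGMA \<alpha>:nonempty_compositions (Suc q). incr_seqs (length \<alpha>))"
    using has_sum_run_encodings_iff unfolding g_def run_encodings_def by simp
  have "((\<lambda>js. g (\<alpha>, js)) has_sum mzv (butlast \<alpha> @ [last \<alpha> + c])) (incr_seqs (length \<alpha>))"
    if "\<alpha> \<in> nonempty_compositions (Suc q)" for \<alpha>
  proof -
    have "(\<lambda>js. g (\<alpha>, js)) summable_on incr_seqs (length \<alpha>)"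
      using summable_on_SigmaD1[of "\<lambda>\<alpha> js. g (\<alpha>, js)"] g that by (auto dest: has_sum_imp_summable)
    moreover have "\<alpha> \<noteq> []" using that by (simp add: nonempty_compositions_def)
    ultimately show ?thesis
      by (simp add: g_def mzv_def incr_seqs_def has_sum_infsum)
  qed
  with g have "((\<lambda>\<alpha>. mzv (butlast \<alpha> @ [last \<alpha> + c])) has_sum mzv_star (replicate q 1 @ [Suc c]))
      (\<Union>r\<in>{1..Suc q}. compositions r (Suc q))"
    unfolding nonempty_compositions_eq_Union by (rule has_sum_SigmaD)
  then have "mzv_star (replicate q 1 @ [Suc c])
      = (\<Sum>\<alpha>\<in>(\<Union>r\<in>{1..Suc q}. compositions r (Suc q)). mzv (butlast \<alpha> @ [last \<alpha> + c]))"
    using finite_compositions by (simp add: has_sum_finite_iff)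
  also have "\<dots> = (\<Sum>r=1..Suc q. \<Sum>\<alpha>\<in>compositions r (Suc q). mzv (butlast \<alpha> @ [last \<alpha> + c]))"
    by (rule sum.UNION_disjoint) (simp, simp add: finite_compositions, auto simp: compositions_def)
  finally show ?thesis by simp
qed

section \<open>One-dimensional integrals\<close>

lemma nn_integral_FTC_Ioo:
  fixes f F :: "real \<Rightarrow> real"
  assumes "f \<in> borel_measurable borel" "a \<le> b"
    and "\<And>x. x \<in> {a..b} \<Longrightarrow> (F has_real_derivative f x) (at x)"
    and "\<And>x. x \<in> {a..b} \<Longrightarrow> 0 \<le> f x"
  shows "(\<integral>\<^sup>+x\<in>{a<..<b}. ennreal (f x) \<partial>lborel) = ennreal (F b - F a)"
proof -
  have "AE x in lborel. x \<noteq> a" "AE x in lborel. x \<noteq> b"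
    by (rule AE_lborel_singleton)+
  then have "(\<integral>\<^sup>+x\<in>{a<..<b}. ennreal (f x) \<partial>lborel) = (\<integral>\<^sup>+x\<in>{a..b}. ennreal (f x) \<partial>lborel)"
    by (intro nn_integral_cong_AE) (auto simp: indicator_def)
  also have "\<dots> = ennreal (F b - F a)"
    using assms by (intro nn_integral_FTC_Icc) auto
  finally show ?thesis .
qed

lemma nn_integral_swap_triangle:
  fixes \<phi> \<psi> :: "real \<Rightarrow> real"
  assumes [measurable]: "\<phi> \<in> borel_measurable borel" "\<psi> \<in> borel_measurable borel"
  shows "(\<integral>\<^sup>+t\<in>{a<..<b}. ennreal (\<psi> t) * (\<integral>\<^sup>+s\<in>{a<..<t}. ennreal (\<phi> s) \<partial>lborel) \<partial>lborel)
       = (\<integral>\<^sup>+s\<in>{a<..<b}. ennreal (\<phi> s) * (\<integral>\<^sup>+t\<in>{s<..<b}. ennreal (\<psi> t) \<partial>lborel) \<partial>lborel)"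
proof -
  define T where "T = {(s, t). a < s \<and> s < t \<and> t < (b::real)}"
  define G where "G = (\<lambda>s t. ennreal (\<phi> s) * ennreal (\<psi> t) * indicator T (s, t))"
  have "T = {x\<in>space (lborel \<Otimes>\<^sub>M lborel). a < fst x \<and> fst x < snd x \<and> snd x < b}"
    by (auto simp: T_def space_pair_measure)
  also have "\<dots> \<in> sets (lborel \<Otimes>\<^sub>M lborel)"
    by measurable
  finally have [measurable]: "T \<in> sets (lborel \<Otimes>\<^sub>M lborel)" .
  have "(\<integral>\<^sup>+t\<in>{a<..<b}. ennreal (\<psi> t) * (\<integral>\<^sup>+s\<in>{a<..<t}. ennreal (\<phi> s) \<partial>lborel) \<partial>lborel)
      = (\<integral>\<^sup>+t. (\<integral>\<^sup>+s. G s t \<partial>lborel) \<partial>lborel)"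
    by (intro nn_integral_cong, subst nn_integral_cmult[symmetric], measurable,
        subst nn_integral_multc[symmetric], measurable, intro nn_integral_cong)
      (auto simp: G_def T_def indicator_def mult.commute)
  also have "\<dots> = (\<integral>\<^sup>+s. (\<integral>\<^sup>+t. G s t \<partial>lborel) \<partial>lborel)"
    by (rule lborel_pair.Fubini') (simp add: G_def)
  also have "\<dots> = (\<integral>\<^sup>+s\<in>{a<..<b}. ennreal (\<phi> s) * (\<integral>\<^sup>+t\<in>{s<..<b}. ennreal (\<psi> t) \<partial>lborel) \<partial>lborel)"
    by (intro nn_integral_cong, subst nn_integral_cmult[symmetric], measurable,
        subst nn_integral_multc[symmetric], measurable, intro nn_integral_cong)
      (auto simp: G_def T_def indicator_def)
  finally show ?thesis .
qed

lemma nn_integral_power_Ioo: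
  fixes a b :: real
  assumes "0 \<le> a" "a \<le> b"
  shows "(\<integral>\<^sup>+t\<in>{a<..<b}. ennreal (t ^ m) \<partial>lborel)
       = ennreal ((b ^ Suc m - a ^ Suc m) / Suc m)"
proof -
  have "((\<lambda>t. t ^ Suc m / Suc m) has_real_derivative real (Suc m) * t ^ m / Suc m) (at t)"
    for t :: real
    using DERIV_pow[of "Suc m" t] by (intro DERIV_cdivide) simp
  then have "((\<lambda>t. t ^ Suc m / Suc m) has_real_derivative t ^ m) (at t)" for t :: real
    by simp
  then show ?thesis
    using assms by (subst nn_integral_FTC_Ioo[where F = "\<lambda>t. t ^ Suc m / Suc m"])
      (auto simp: diff_divide_distrib)
qed

(* The q-fold iterated integral of ds/(1-s) over 0 < s_1 < ... < s_q < t,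
   see nn_integral_log_power. *)
definition log_power :: "nat \<Rightarrow> real \<Rightarrow> real" where
  "log_power q t = ln (1 / (1 - t)) ^ q / fact q"

lemma log_power_nonneg: "0 \<le> t \<Longrightarrow> t < 1 \<Longrightarrow> 0 \<le> log_power q t"
  unfolding log_power_def by simp

lemma borel_measurable_log_power [measurable]: "log_power q \<in> borel_measurable borel"
  unfolding log_power_def by measurable

lemma nn_integral_log_power:
  assumes "0 \<le> t" "t < 1"
  shows "(\<integral>\<^sup>+s\<in>{0<..<t}. ennreal (log_power q s / (1 - s)) \<partial>lborel)
       = ennreal (log_power (Suc q) t)"
proof -
  have "(log_power (Suc q) has_real_derivative log_power q s / (1 - s)) (at s)" if "s < 1" for s
  proof -
    have "((\<lambda>s. - ln (1 - s)) has_real_derivative 1 / (1 - s)) (at s)"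
      using that by (auto intro!: derivative_eq_intros)
    then have "((\<lambda>s. ln (1 / (1 - s))) has_real_derivative 1 / (1 - s)) (at s)"
      by (simp add: inverse_eq_divide[symmetric] ln_inverse)
    then have "((\<lambda>s. ln (1 / (1 - s)) ^ Suc q) has_real_derivative
        real (Suc q) * (1 / (1 - s) * ln (1 / (1 - s)) ^ (Suc q - Suc 0))) (at s)"
      by (rule DERIV_power)
    then have "((\<lambda>s. ln (1 / (1 - s)) ^ Suc q / fact (Suc q)) has_real_derivative
        real (Suc q) * (1 / (1 - s) * ln (1 / (1 - s)) ^ q) / fact (Suc q)) (at s)"
      by (intro DERIV_cdivide) simp
    then show ?thesis
      unfolding log_power_def[abs_def] by (simp add: mult.commute)
  qed
  then show ?thesis
    using assms by (subst nn_integral_FTC_Ioo[where F = "log_power (Suc q)"])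
      (auto simp: log_power_def intro!: divide_nonneg_nonneg)
qed

lemma nn_integral_ln_ratio_power:
  assumes "0 < t" "t \<le> a"
  shows "(\<integral>\<^sup>+s\<in>{t<..<a}. ennreal (Suc n * ln (a / s) ^ n / s) \<partial>lborel) = ennreal (ln (a / t) ^ Suc n)"
proof -
  have "((\<lambda>s. - (ln (a / s) ^ Suc n)) has_real_derivative real (Suc n) * ln (a / s) ^ n / s) (at s)"
    if "0 < s" for s
  proof -
    have "((\<lambda>s. ln (a / s)) has_real_derivative - 1 / s) (at s)"
      using that assms by (auto intro!: derivative_eq_intros simp: field_simps)
    from DERIV_minus[OF DERIV_power[OF this, of "Suc n"]] show ?thesis
      by simp
  qed
  then show ?thesis
    using assms by (subst nn_integral_FTC_Ioo[where F = "\<lambda>s. - (ln (a / s) ^ Suc n)"]) auto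
qed

lemma nn_integral_power_ln_ratio_power:
  assumes "0 < a"
  shows "(\<integral>\<^sup>+t\<in>{0<..<a}. ennreal (t ^ m * ln (a / t) ^ n) \<partial>lborel)
       = ennreal (fact n * a ^ Suc m / Suc m ^ Suc n)"
proof (induction n)
  case 0
  show ?case using nn_integral_power_Ioo[of 0 a m] assms by simp
next
  case (Suc n)
  define \<psi> where "\<psi> s = real (Suc n) * ln (a / s) ^ n / s" for s
  have [measurable]: "\<psi> \<in> borel_measurable borel"
    unfolding \<psi>_def by measurable
  have "(\<integral>\<^sup>+t\<in>{0<..<a}. ennreal (t ^ m * ln (a / t) ^ Suc n) \<partial>lborel)
      = (\<integral>\<^sup>+t\<in>{0<..<a}. ennreal (t ^ m) * (\<integral>\<^sup>+s\<in>{t<..<a}. ennreal (\<psi> s) \<partial>lborel) \<partial>lborel)"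
  proof (rule set_nn_integral_cong)
    fix t assume t: "t \<in> space lborel \<inter> {0<..<a}"
    then have "(\<integral>\<^sup>+s\<in>{t<..<a}. ennreal (\<psi> s) \<partial>lborel) = ennreal (ln (a / t) ^ Suc n)"
      unfolding \<psi>_def by (intro nn_integral_ln_ratio_power) auto
    moreover have "0 \<le> ln (a / t)" using t by simp
    ultimately show "ennreal (t ^ m * ln (a / t) ^ Suc n)
        = ennreal (t ^ m) * (\<integral>\<^sup>+s\<in>{t<..<a}. ennreal (\<psi> s) \<partial>lborel)"
      using t by (simp add: ennreal_mult)
  qed auto
  also have "\<dots> = (\<integral>\<^sup>+s\<in>{0<..<a}. ennreal (\<psi> s) * (\<integral>\<^sup>+t\<in>{0<..<s}. ennreal (t ^ m) \<partial>lborel) \<partial>lborel)"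
    by (rule nn_integral_swap_triangle[symmetric]) auto
  also have "\<dots> = (\<integral>\<^sup>+s\<in>{0<..<a}. ennreal (Suc n / Suc m) * ennreal (s ^ m * ln (a / s) ^ n) \<partial>lborel)"
  proof (rule set_nn_integral_cong)
    fix s assume s: "s \<in> space lborel \<inter> {0<..<a}"
    then have "0 \<le> ln (a / s)" by simp
    moreover have "\<psi> s * (s ^ Suc m / Suc m) = Suc n / Suc m * (s ^ m * ln (a / s) ^ n)"
    proof -
      have "\<psi> s * (s ^ Suc m / Suc m) = real (Suc n) * ln (a / s) ^ n / s * (s * s ^ m / real (Suc m))"
        by (simp only: \<psi>_def power_Suc)
      also have "\<dots> = Suc n / Suc m * (s ^ m * ln (a / s) ^ n)"
        using s by (simp del: of_nat_Suc add: field_simps)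
      finally show ?thesis .
    qed
    ultimately show "ennreal (\<psi> s) * (\<integral>\<^sup>+t\<in>{0<..<s}. ennreal (t ^ m) \<partial>lborel)
        = ennreal (Suc n / Suc m) * ennreal (s ^ m * ln (a / s) ^ n)"
      using s nn_integral_power_Ioo[of 0 s m]
      by (simp add: \<psi>_def ennreal_mult[symmetric] del: of_nat_Suc)
  qed auto
  also have "\<dots> = ennreal (Suc n / Suc m) * ennreal (fact n * a ^ Suc m / Suc m ^ Suc n)"
    by (simp add: nn_integral_cmult mult.assoc Suc)
  also have "\<dots> = ennreal (fact (Suc n) * a ^ Suc m / Suc m ^ Suc (Suc n))"
    using assms by (simp add: ennreal_mult[symmetric] field_simps)
  finally show ?case .
qed

lemma nn_integral_power_Ioo_times_div_one_minus:
  assumes "0 < s" "s < 1" "0 \<le> x"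
  shows "ennreal (x / (1 - s)) * (\<integral>\<^sup>+t\<in>{s<..<1}. ennreal (t ^ k) \<partial>lborel)
       = ennreal (1 / Suc k) * (\<Sum>i<Suc k. ennreal (s ^ i * x))"
proof -
  have "(\<Sum>i<Suc k. s ^ i * x) = (1 - s ^ Suc k) / (1 - s) * x"
    using assms by (simp only: sum_distrib_right[symmetric] sum_gp_strict) simp
  then have gp: "x / (1 - s) * ((1 - s ^ Suc k) / Suc k) = 1 / Suc k * (\<Sum>i<Suc k. s ^ i * x)"
    by (simp only:) (simp add: ac_simps)
  have "s ^ Suc k \<le> 1"
    using assms by (intro power_le_one) auto
  then have "0 \<le> x / (1 - s)" "0 \<le> (1 - s ^ Suc k) / Suc k"
    using assms by (auto simp del: power_Suc)
  moreover have "(\<integral>\<^sup>+t\<in>{s<..<1}. ennreal (t ^ k) \<partial>lborel) = ennreal ((1 - s ^ Suc k) / Suc k)"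
    using assms nn_integral_power_Ioo[of s 1 k] by simp
  ultimately have "ennreal (x / (1 - s)) * (\<integral>\<^sup>+t\<in>{s<..<1}. ennreal (t ^ k) \<partial>lborel)
      = ennreal (x / (1 - s) * ((1 - s ^ Suc k) / Suc k))"
    by (simp only: ennreal_mult)
  also have "\<dots> = ennreal (1 / Suc k) * ennreal (\<Sum>i<Suc k. s ^ i * x)"
    unfolding gp using assms by (intro ennreal_mult sum_nonneg mult_nonneg_nonneg) auto
  also have "\<dots> = ennreal (1 / Suc k) * (\<Sum>i<Suc k. ennreal (s ^ i * x))"
    using assms by (subst sum_ennreal) auto
  finally show ?thesis .
qed

lemma nn_integral_power_log_power:
  "(\<integral>\<^sup>+t\<in>{0<..<1}. ennreal (t ^ k * log_power q t) \<partial>lborel)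
     = ennreal (harmonic_star q (Suc k) / Suc k)"
proof (induction q arbitrary: k)
  case 0
  show ?case using nn_integral_power_Ioo[of 0 1 k] by (simp add: log_power_def)
next
  case (Suc q)
  define \<phi> where "\<phi> s = log_power q s / (1 - s)" for s
  have [measurable]: "\<phi> \<in> borel_measurable borel"
    unfolding \<phi>_def by measurable
  have "(\<integral>\<^sup>+t\<in>{0<..<1}. ennreal (t ^ k * log_power (Suc q) t) \<partial>lborel)
      = (\<integral>\<^sup>+t\<in>{0<..<1}. ennreal (t ^ k) * (\<integral>\<^sup>+s\<in>{0<..<t}. ennreal (\<phi> s) \<partial>lborel) \<partial>lborel)"
  proof (rule set_nn_integral_cong)
    fix t :: real assume "t \<in> space lborel \<inter> {0<..<1}"
    then show "ennreal (t ^ k * log_power (Suc q) t)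
        = ennreal (t ^ k) * (\<integral>\<^sup>+s\<in>{0<..<t}. ennreal (\<phi> s) \<partial>lborel)"
      by (simp add: \<phi>_def nn_integral_log_power ennreal_mult log_power_nonneg)
  qed auto
  also have "\<dots> = (\<integral>\<^sup>+s\<in>{0<..<1}. ennreal (\<phi> s) * (\<integral>\<^sup>+t\<in>{s<..<1}. ennreal (t ^ k) \<partial>lborel) \<partial>lborel)"
    by (rule nn_integral_swap_triangle) auto
  also have "\<dots> = (\<integral>\<^sup>+s\<in>{0<..<1}.
      ennreal (1 / Suc k) * (\<Sum>i<Suc k. ennreal (s ^ i * log_power q s)) \<partial>lborel)"
  proof (rule set_nn_integral_cong)
    fix s :: real assume "s \<in> space lborel \<inter> {0<..<1}"
    then show "ennreal (\<phi> s) * (\<integral>\<^sup>+t\<in>{s<..<1}. ennreal (t ^ k) \<partial>lborel)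
        = ennreal (1 / Suc k) * (\<Sum>i<Suc k. ennreal (s ^ i * log_power q s))"
      unfolding \<phi>_def by (intro nn_integral_power_Ioo_times_div_one_minus log_power_nonneg) auto
  qed auto
  also have "\<dots> = ennreal (1 / Suc k)
      * (\<integral>\<^sup>+s\<in>{0<..<1}. (\<Sum>i<Suc k. ennreal (s ^ i * log_power q s)) \<partial>lborel)"
    by (simp only: mult.assoc, rule nn_integral_cmult) measurable
  also have "\<dots> = ennreal (1 / Suc k)
      * (\<Sum>i<Suc k. \<integral>\<^sup>+s\<in>{0<..<1}. ennreal (s ^ i * log_power q s) \<partial>lborel)"
    unfolding sum_distrib_right by (subst nn_integral_sum) auto
  also have "\<dots> = ennreal (1 / Suc k) * ennreal (\<Sum>i<Suc k. harmonic_star q (Suc i) / Suc i)"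
    by (simp only: Suc.IH, subst sum_ennreal) (auto intro!: divide_nonneg_nonneg harmonic_star_nonneg)
  also have "\<dots> = ennreal (harmonic_star (Suc q) (Suc k) / Suc k)"
  proof -
    have "harmonic_star (Suc q) (Suc k) = (\<Sum>i<Suc k. harmonic_star q (Suc i) / Suc i)"
      unfolding harmonic_star_Suc by (simp add: sum.atLeast1_atMost_eq del: of_nat_Suc)
    moreover have "0 \<le> (\<Sum>i<Suc k. harmonic_star q (Suc i) / Suc i)"
      by (intro sum_nonneg divide_nonneg_nonneg harmonic_star_nonneg) auto
    ultimately show ?thesis
      by (simp add: ennreal_mult[symmetric])
  qed
  finally show ?case .
qed

lemma nn_integral_ln_ratio_power_div_one_minus:
  assumes "0 < a" "a < 1"
  shows "(\<integral>\<^sup>+t\<in>{0<..<a}. ennreal (ln (a / t) ^ n / (1 - t)) \<partial>lborel)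
       = (\<Sum>m. ennreal (fact n * a ^ Suc m / Suc m ^ Suc n))"
proof -
  have "(\<integral>\<^sup>+t\<in>{0<..<a}. ennreal (ln (a / t) ^ n / (1 - t)) \<partial>lborel)
      = (\<integral>\<^sup>+t. (\<Sum>m. ennreal (t ^ m * ln (a / t) ^ n) * indicator {0<..<a} t) \<partial>lborel)"
  proof (rule nn_integral_cong)
    fix t :: real
    show "ennreal (ln (a / t) ^ n / (1 - t)) * indicator {0<..<a} t
        = (\<Sum>m. ennreal (t ^ m * ln (a / t) ^ n) * indicator {0<..<a} t)"
    proof (cases "t \<in> {0<..<a}")
      case True
      have "(\<lambda>m. t ^ m * ln (a / t) ^ n) sums (1 / (1 - t) * ln (a / t) ^ n)"
        using True assms by (intro sums_mult2 geometric_sums) auto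
      then have "(\<Sum>m. ennreal (t ^ m * ln (a / t) ^ n)) = ennreal (1 / (1 - t) * ln (a / t) ^ n)"
        using True by (intro suminf_ennreal_eq) auto
      then show ?thesis using True by simp
    qed simp
  qed
  also have "\<dots> = (\<Sum>m. \<integral>\<^sup>+t\<in>{0<..<a}. ennreal (t ^ m * ln (a / t) ^ n) \<partial>lborel)"
    by (rule nn_integral_suminf) measurable
  also have "\<dots> = (\<Sum>m. ennreal (fact n * a ^ Suc m / Suc m ^ Suc n))"
    using assms by (simp add: nn_integral_power_ln_ratio_power)
  finally show ?thesis .
qed

section \<open>The integral over E2\<close>

definition zeta_star_kernel :: "nat \<Rightarrow> nat \<Rightarrow> real \<times> real \<Rightarrow> real" where
  "zeta_star_kernel q n t = ln (1 / (1 - snd t)) ^ q * ln (snd t / fst t) ^ n / ((1 - fst t) * snd t)"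

lemma E2_sets: "E2 \<in> sets (lborel \<Otimes>\<^sub>M lborel)"
proof -
  have "E2 = {x\<in>space (lborel \<Otimes>\<^sub>M lborel). 0 < fst x \<and> fst x < snd x \<and> snd x < (1::real)}"
    by (auto simp: E2_def space_pair_measure)
  also have "\<dots> \<in> sets (lborel \<Otimes>\<^sub>M lborel)"
    by measurable
  finally show ?thesis .
qed

lemma nn_integral_zeta_star_kernel_section:
  assumes "0 < t2" "t2 < 1"
  shows "(\<integral>\<^sup>+t1. ennreal (zeta_star_kernel q n (t1, t2)) * indicator E2 (t1, t2) \<partial>lborel)
       = (\<Sum>m. ennreal (fact q * fact n / Suc m ^ Suc n * (t2 ^ m * log_power q t2)))"
proof -
  define c where "c = fact q * log_power q t2 / t2"
  have "0 \<le> c"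
    using assms by (simp add: c_def log_power_nonneg)
  have "(\<integral>\<^sup>+t1. ennreal (zeta_star_kernel q n (t1, t2)) * indicator E2 (t1, t2) \<partial>lborel)
      = (\<integral>\<^sup>+t1. ennreal c * (ennreal (ln (t2 / t1) ^ n / (1 - t1)) * indicator {0<..<t2} t1) \<partial>lborel)"
  proof (rule nn_integral_cong)
    fix t1 :: real
    show "ennreal (zeta_star_kernel q n (t1, t2)) * indicator E2 (t1, t2)
        = ennreal c * (ennreal (ln (t2 / t1) ^ n / (1 - t1)) * indicator {0<..<t2} t1)"
    proof (cases "t1 \<in> {0<..<t2}")
      case True
      then have "zeta_star_kernel q n (t1, t2) = c * (ln (t2 / t1) ^ n / (1 - t1))"
        using assms by (simp add: zeta_star_kernel_def c_def log_power_def field_simps)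
      moreover have "0 \<le> ln (t2 / t1) ^ n / (1 - t1)"
        using True assms by simp
      ultimately have "ennreal (zeta_star_kernel q n (t1, t2))
          = ennreal c * ennreal (ln (t2 / t1) ^ n / (1 - t1))"
        using \<open>0 \<le> c\<close> by (simp only: ennreal_mult)
      then show ?thesis
        using True assms by (simp add: E2_def)
    qed (auto simp: E2_def)
  qed
  also have "\<dots> = ennreal c * (\<integral>\<^sup>+t1\<in>{0<..<t2}. ennreal (ln (t2 / t1) ^ n / (1 - t1)) \<partial>lborel)"
    by (rule nn_integral_cmult) measurable
  also have "\<dots> = ennreal c * (\<Sum>m. ennreal (fact n * t2 ^ Suc m / Suc m ^ Suc n))"
    using assms by (simp only: nn_integral_ln_ratio_power_div_one_minus)
  also have "\<dots> = (\<Sum>m. ennreal c * ennreal (fact n * t2 ^ Suc m / Suc m ^ Suc n))"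
    by (rule ennreal_suminf_cmult[symmetric])
  also have "\<dots> = (\<Sum>m. ennreal (fact q * fact n / Suc m ^ Suc n * (t2 ^ m * log_power q t2)))"
  proof (rule suminf_cong)
    fix m
    have "ennreal c * ennreal (fact n * t2 ^ Suc m / Suc m ^ Suc n)
        = ennreal (c * (fact n * t2 ^ Suc m / Suc m ^ Suc n))"
      using \<open>0 \<le> c\<close> assms by (intro ennreal_mult[symmetric]) auto
    also have "c * (fact n * t2 ^ Suc m / Suc m ^ Suc n)
        = fact q * fact n / Suc m ^ Suc n * (t2 ^ m * log_power q t2)"
      using assms by (simp add: c_def field_simps)
    finally show "ennreal c * ennreal (fact n * t2 ^ Suc m / Suc m ^ Suc n)
        = ennreal (fact q * fact n / Suc m ^ Suc n * (t2 ^ m * log_power q t2))" .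
  qed
  finally show ?thesis .
qed

lemma nn_integral_zeta_star_kernel:
  "(\<integral>\<^sup>+t\<in>E2. ennreal (zeta_star_kernel q n t) \<partial>lborel)
     = (\<Sum>m. ennreal (fact q * fact n * (harmonic_star q (Suc m) / real (Suc m) ^ (n + 2))))"
proof -
  define A where "A m = fact q * fact n / Suc m ^ Suc n" for m :: nat
  have A_nonneg: "0 \<le> A m" for m
    by (simp add: A_def)
  have [measurable]: "(\<lambda>t. ennreal (zeta_star_kernel q n t) * indicator E2 t)
      \<in> borel_measurable (lborel \<Otimes>\<^sub>M lborel)"
    using E2_sets unfolding zeta_star_kernel_def by measurable
  have "(\<integral>\<^sup>+t\<in>E2. ennreal (zeta_star_kernel q n t) \<partial>lborel)
      = (\<integral>\<^sup>+t2. (\<integral>\<^sup>+t1. ennreal (zeta_star_kernel q n (t1, t2)) * indicator E2 (t1, t2) \<partial>lborel) \<partial>lborel)"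
    by (subst lborel_prod[symmetric], subst lborel_pair.nn_integral_snd[symmetric]) simp_all
  also have "\<dots> = (\<integral>\<^sup>+t2. (\<Sum>m. ennreal (A m)
      * (ennreal (t2 ^ m * log_power q t2) * indicator {0<..<1} t2)) \<partial>lborel)"
  proof (rule nn_integral_cong)
    fix t2 :: real
    show "(\<integral>\<^sup>+t1. ennreal (zeta_star_kernel q n (t1, t2)) * indicator E2 (t1, t2) \<partial>lborel)
        = (\<Sum>m. ennreal (A m) * (ennreal (t2 ^ m * log_power q t2) * indicator {0<..<1} t2))"
    proof (cases "t2 \<in> {0<..<1}")
      case True
      then have "(\<integral>\<^sup>+t1. ennreal (zeta_star_kernel q n (t1, t2)) * indicator E2 (t1, t2) \<partial>lborel)
          = (\<Sum>m. ennreal (A m * (t2 ^ m * log_power q t2)))"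
        unfolding A_def by (intro nn_integral_zeta_star_kernel_section) auto
      also have "\<dots> = (\<Sum>m. ennreal (A m) * ennreal (t2 ^ m * log_power q t2))"
        using True by (intro suminf_cong ennreal_mult A_nonneg mult_nonneg_nonneg log_power_nonneg) auto
      finally show ?thesis
        using True by simp
    qed (auto simp: E2_def)
  qed
  also have "\<dots> = (\<Sum>m. \<integral>\<^sup>+t2. ennreal (A m)
      * (ennreal (t2 ^ m * log_power q t2) * indicator {0<..<1} t2) \<partial>lborel)"
    by (rule nn_integral_suminf) measurable
  also have "\<dots> = (\<Sum>m. ennreal (A m) * (\<integral>\<^sup>+t\<in>{0<..<1}. ennreal (t ^ m * log_power q t) \<partial>lborel))"
    by (intro suminf_cong nn_integral_cmult) measurable
  also have "\<dots> = (\<Sum>m. ennreal (fact q * fact n * (harmonic_star q (Suc m) / real (Suc m) ^ (n + 2))))"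
  proof (rule suminf_cong)
    fix m
    have "ennreal (A m) * ennreal (harmonic_star q (Suc m) / Suc m)
        = ennreal (A m * (harmonic_star q (Suc m) / Suc m))"
      by (intro ennreal_mult[symmetric] A_nonneg divide_nonneg_nonneg harmonic_star_nonneg) auto
    also have "A m * (harmonic_star q (Suc m) / Suc m)
        = fact q * fact n * (harmonic_star q (Suc m) / real (Suc m) ^ (n + 2))"
      by (simp add: A_def field_simps)
    finally show "ennreal (A m) * (\<integral>\<^sup>+t\<in>{0<..<1}. ennreal (t ^ m * log_power q t) \<partial>lborel)
        = ennreal (fact q * fact n * (harmonic_star q (Suc m) / real (Suc m) ^ (n + 2)))"
      by (simp only: nn_integral_power_log_power)
  qed
  finally show ?thesis .
qed

lemma zeta_star_kernel_nonneg: "t \<in> E2 \<Longrightarrow> 0 \<le> zeta_star_kernel q n t"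
  by (auto simp: E2_def zeta_star_kernel_def intro!: divide_nonneg_nonneg mult_nonneg_nonneg)

lemma set_integral_zeta_star_kernel:
  "(\<integral>t\<in>E2. zeta_star_kernel q n t \<partial>lborel)
     = fact q * fact n * (\<Sum>m. harmonic_star q (Suc m) / real (Suc m) ^ (n + 2))"
proof -
  define Z where "Z = (\<Sum>m. harmonic_star q (Suc m) / real (Suc m) ^ (n + 2))"
  have "0 \<le> Z"
    unfolding Z_def
    by (intro suminf_nonneg summable_harmonic_star_series divide_nonneg_nonneg harmonic_star_nonneg) auto
  have "(\<lambda>m. fact q * fact n * (harmonic_star q (Suc m) / real (Suc m) ^ (n + 2)))
      sums (fact q * fact n * Z)"
    unfolding Z_def by (intro sums_mult summable_sums summable_harmonic_star_series)
  then have "(\<Sum>m. ennreal (fact q * fact n * (harmonic_star q (Suc m) / real (Suc m) ^ (n + 2))))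
      = ennreal (fact q * fact n * Z)"
    by (intro suminf_ennreal_eq)
      (auto intro!: mult_nonneg_nonneg divide_nonneg_nonneg harmonic_star_nonneg)
  moreover have "(\<integral>\<^sup>+t. ennreal (indicator E2 t *\<^sub>R zeta_star_kernel q n t) \<partial>lborel)
      = (\<integral>\<^sup>+t\<in>E2. ennreal (zeta_star_kernel q n t) \<partial>lborel)"
    by (intro nn_integral_cong) (simp add: indicator_def)
  ultimately have nn: "(\<integral>\<^sup>+t. ennreal (indicator E2 t *\<^sub>R zeta_star_kernel q n t) \<partial>lborel)
      = ennreal (fact q * fact n * Z)"
    by (simp only: nn_integral_zeta_star_kernel)
  have "(\<lambda>t. indicator E2 t *\<^sub>R zeta_star_kernel q n t) \<in> borel_measurable (lborel \<Otimes>\<^sub>M lborel)"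
    using E2_sets unfolding zeta_star_kernel_def by measurable
  then have "integrable lborel (\<lambda>t. indicator E2 t *\<^sub>R zeta_star_kernel q n t)
      \<and> (\<integral>t. indicator E2 t *\<^sub>R zeta_star_kernel q n t \<partial>lborel) = fact q * fact n * Z"
    using nn \<open>0 \<le> Z\<close> by (subst nn_integral_eq_integrable[symmetric])
      (auto simp: lborel_prod indicator_def zeta_star_kernel_nonneg)
  then show ?thesis
    by (simp add: set_lebesgue_integral_def Z_def)
qed

theorem corollary2p3:
  fixes q n :: nat
  shows "mzv_star (replicate q 1 @ [n + 2])
           = (\<Sum>r=1..q+1. \<Sum>\<alpha>\<in>compositions r (q + 1).
                mzv (butlast \<alpha> @ [last \<alpha> + n + 1]))
       \<and> (\<Sum>r=1..q+1. \<Sum>\<alpha>\<in>compositions r (q + 1).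
                mzv (butlast \<alpha> @ [last \<alpha> + n + 1]))
           = 1 / (fact q * fact n) *
             (\<integral>t\<in>E2. (ln (1 / (1 - snd t))) ^ q * (ln (snd t / fst t)) ^ n
                        / ((1 - fst t) * snd t) \<partial>lborel)"
proof -
  define Z where "Z = (\<Sum>m. harmonic_star q (Suc m) / real (Suc m) ^ (n + 2))"
  have star_series: "(mzv_term (replicate q 1 @ [Suc (n + 1)]) has_sum Z) (nondecr_seqs (Suc q))"
    using has_sum_mzv_star_ones[of q n] by (simp add: Z_def)
  then have "mzv_star (replicate q 1 @ [Suc (n + 1)]) = Z"
    unfolding mzv_star_def by (simp add: nondecr_seqs_def infsumI)
  moreover have "mzv_star (replicate q 1 @ [Suc (n + 1)])
      = (\<Sum>r=1..q+1. \<Sum>\<alpha>\<in>compositions r (q + 1). mzv (butlast \<alpha> @ [last \<alpha> + (n + 1)]))"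
    using has_sum_imp_summable[OF star_series] by (rule mzv_star_ones_eq_sum_mzv)
  moreover have "1 / (fact q * fact n) * (\<integral>t\<in>E2. zeta_star_kernel q n t \<partial>lborel) = Z"
    by (simp add: set_integral_zeta_star_kernel Z_def)
  ultimately show ?thesis
    by (simp add: zeta_star_kernel_def add.assoc numeral_2_eq_2)
qed

end
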